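(* If $(\Phi,D)$ is a domain-free s-continuous information algebra, then its associated labeled information algebra $(\Psi,D)$ is a labeled s-continuous information algebra, i.e., there is a family $\{\Gamma_x\}_{x\in D}$ making $(\Psi,\{\Gamma_x\}_{x\in D},D)$ a labeled s-continuous information algebra.
   Context: A domain-free information algebra $(\Phi,D)$ consists of a set $\Phi$, a lattice $D$, a combination $\otimes$ and a focusing $(\psi,x)\mapsto\psi^{\Rightarrow x}$ ($x\in D$) such that: $\otimes$ is associative, commutative with neutral element $e$; $(\psi^{\Rightarrow y})^{\Rightarrow x}=\psi^{\Rightarrow x\wedge y}$; $(\phi^{\Rightarrow x}\otimes\psi)^{\Rightarrow x}=\phi^{\Rightarrow x}\otimes\psi^{\Rightarrow x}$; every $\psi$ has some $x$ with $\psi^{\Rightarrow x}=\psi$; $\psi\otimes\psi^{\Rightarrow x}=\psi$. In both domain-free and labeled algebras, $\psi\le\phi$ iff $\psi\otimes\phi=\phi$; suprema refer to this order. $a\ll b$ means: for every directed $X$ with $b\le\vee X$ there is $c\in X$ with $a\le c$. A domain-free $(\Phi,D)$ with $D$ having a top element is s-continuous if there exists $\Gamma\subseteq\Phi$, closed under combination and containing $e$, such that every directed subset of $\Gamma$ has a supremum in $\Phi$ and $\phi^{\Rightarrow x}=\vee\{\psi\in\Gamma:\psi=\psi^{\Rightarrow x}\ll\phi\}$ for all $\phi\in\Phi$, $x\in D$. The associated labeled information algebra is $(\Psi,D)$ with $\Psi=\{(\phi,x)\in\Phi\times D:\phi=\phi^{\Rightarrow x}\}$, labeling $d(\phi,x)=x$,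 combination $(\phi,x)\otimes(\psi,y)=(\phi\otimes\psi,x\vee y)$, marginalization $(\phi,x)^{\downarrow y}=(\phi^{\Rightarrow y},y)$ for $y\le x$; its neutral elements are $e_x=(e,x)$. For a labeled information algebra (labeling $d$, combination $\otimes$, marginalization $\downarrow$, neutral elements $e_x$ with $d(e_x)=x$), write $\Phi_x$ for the elements with label $x$ and $\ll_x$ for the way-below relation of the poset $(\Phi_x,\le)$. A labeled s-continuous information algebra is a triple $(\Phi,\{\Gamma_x\}_{x\in D},D)$ with $D$ having a top element $\top$ and, for each $x\in D$, $\Gamma_x\subseteq\Phi_x$ closed under combination, containing $e_x$, such that: (convergency) every directed $X\subseteq\Gamma_x$ has a supremum $\vee X$ and $\vee X\in\Phi_x$; (strong density) for all $\phi\in\Phi_x$, $\phi=\vee\{\psi^{\downarrow x}\in\Gamma_x:\ \psi\in\Phi,\ x\le d(\psi),\ \psi^{\downarrow x}\otimes e_\top\in\Gamma_\top,\ \psi^{\downarrow x}\ll_x\phi\}$. *)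

theory Defs
  imports Main
begin

definition info_le :: "('b \<Rightarrow> 'b \<Rightarrow> 'b) \<Rightarrow> 'b \<Rightarrow> 'b \<Rightarrow> bool" where
  "info_le comb a b \<longleftrightarrow> comb a b = b"

definition is_sup_in :: "'b set \<Rightarrow> ('b \<Rightarrow> 'b \<Rightarrow> bool) \<Rightarrow> 'b set \<Rightarrow> 'b \<Rightarrow> bool" where
  "is_sup_in C le X s \<longleftrightarrow> s \<in> C \<and> (\<forall>a\<in>X. le a s) \<and>
     (\<forall>u\<in>C. (\<forall>a\<in>X. le a u) \<longrightarrow> le s u)"

definition directed_wrt :: "('b \<Rightarrow> 'b \<Rightarrow> bool) \<Rightarrow> 'b set \<Rightarrow> bool" where
  "directed_wrt le X \<longleftrightarrow> X \<noteq> {} \<and> (\<forall>a\<in>X. \<forall>b\<in>X. \<exists>c\<in>X. le a c \<and> le b c)"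

definition way_below_in :: "'b set \<Rightarrow> ('b \<Rightarrow> 'b \<Rightarrow> bool) \<Rightarrow> 'b \<Rightarrow> 'b \<Rightarrow> bool" where
  "way_below_in C le a b \<longleftrightarrow>
     (\<forall>X s. X \<subseteq> C \<longrightarrow> directed_wrt le X \<longrightarrow> is_sup_in C le X s \<longrightarrow> le b s \<longrightarrow>
        (\<exists>c\<in>X. le a c))"

section \<open>Domain-free information algebras (\<Phi> = the whole type 'a, D = the type 'd)\<close>

definition domain_free_info_algebra ::
  "('a \<Rightarrow> 'a \<Rightarrow> 'a) \<Rightarrow> 'a \<Rightarrow> ('a \<Rightarrow> 'd::lattice \<Rightarrow> 'a) \<Rightarrow> bool" where
  "domain_free_info_algebra comb e foc \<longleftrightarrow>
     (\<forall>a b c. comb (comb a b) c = comb a (comb b c)) \<and>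
     (\<forall>a b. comb a b = comb b a) \<and>
     (\<forall>a. comb e a = a) \<and>
     (\<forall>\<psi> x y. foc (foc \<psi> y) x = foc \<psi> (inf x y)) \<and>
     (\<forall>\<phi> \<psi> x. foc (comb (foc \<phi> x) \<psi>) x = comb (foc \<phi> x) (foc \<psi> x)) \<and>
     (\<forall>\<psi>. \<exists>x. foc \<psi> x = \<psi>) \<and>
     (\<forall>\<psi> x. comb \<psi> (foc \<psi> x) = \<psi>)"

definition df_s_continuous ::
  "('a \<Rightarrow> 'a \<Rightarrow> 'a) \<Rightarrow> 'a \<Rightarrow> ('a \<Rightarrow> 'd::bounded_lattice_top \<Rightarrow> 'a) \<Rightarrow> bool" where
  "df_s_continuous comb e foc \<longleftrightarrow>
     (\<exists>\<Gamma>. (\<forall>a\<in>\<Gamma>. \<forall>b\<in>\<Gamma>. comb a b \<in> \<Gamma>) \<and> e \<in> \<Gamma> \<and>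
        (\<forall>X. X \<subseteq> \<Gamma> \<longrightarrow> directed_wrt (info_le comb) X \<longrightarrow>
              (\<exists>s. is_sup_in UNIV (info_le comb) X s)) \<and>
        (\<forall>\<phi> x. is_sup_in UNIV (info_le comb)
                 {\<psi> \<in> \<Gamma>. \<psi> = foc \<psi> x \<and> way_below_in UNIV (info_le comb) \<psi> \<phi>}
                 (foc \<phi> x)))"

definition assoc_carrier :: "('a \<Rightarrow> 'd \<Rightarrow> 'a) \<Rightarrow> ('a \<times> 'd) set" where
  "assoc_carrier foc = {(\<phi>, x). \<phi> = foc \<phi> x}"

definition assoc_label :: "'a \<times> 'd \<Rightarrow> 'd" where
  "assoc_label p = snd p"

definition assoc_comb ::
  "('a \<Rightarrow> 'a \<Rightarrow> 'a) \<Rightarrow> 'a \<times> 'd::lattice \<Rightarrow> 'a \<times> 'd \<Rightarrow> 'a \<times> 'd" where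
  "assoc_comb comb p q = (comb (fst p) (fst q), sup (snd p) (snd q))"

text \<open>Marginalization (\<phi>,x)\<down>y = (\<phi>\<Rightarrow>y, y); only meaningful (and only used) for y \<le> x.\<close>
definition assoc_marg :: "('a \<Rightarrow> 'd \<Rightarrow> 'a) \<Rightarrow> 'a \<times> 'd \<Rightarrow> 'd \<Rightarrow> 'a \<times> 'd" where
  "assoc_marg foc p y = (foc (fst p) y, y)"

definition assoc_neutral :: "'a \<Rightarrow> 'd \<Rightarrow> 'a \<times> 'd" where
  "assoc_neutral e x = (e, x)"

text \<open>Psi: the carrier; d: labeling; comb: combination; marg: marginalization
  (marg \<psi> x = \<psi>\<down>x, used only for x \<le> d \<psi>); neut x = e_x; \<Gamma> x = \<Gamma>_x.\<close>
definition labeled_s_continuous ::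
  "'b set \<Rightarrow> ('b \<Rightarrow> 'd::bounded_lattice_top) \<Rightarrow> ('b \<Rightarrow> 'b \<Rightarrow> 'b) \<Rightarrow> ('b \<Rightarrow> 'd \<Rightarrow> 'b)
     \<Rightarrow> ('d \<Rightarrow> 'b) \<Rightarrow> ('d \<Rightarrow> 'b set) \<Rightarrow> bool" where
  "labeled_s_continuous Psi d comb marg neut \<Gamma> \<longleftrightarrow>
     (\<forall>x. \<Gamma> x \<subseteq> {p \<in> Psi. d p = x} \<and>
          (\<forall>a\<in>\<Gamma> x. \<forall>b\<in>\<Gamma> x. comb a b \<in> \<Gamma> x) \<and>
          neut x \<in> \<Gamma> x) \<and>
     (\<forall>x X. X \<subseteq> \<Gamma> x \<longrightarrow> directed_wrt (info_le comb) X \<longrightarrow>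
        (\<exists>s. is_sup_in Psi (info_le comb) X s \<and> d s = x)) \<and>
     (\<forall>x. \<forall>\<phi>\<in>{p \<in> Psi. d p = x}.
        is_sup_in Psi (info_le comb)
          {m. \<exists>\<psi>\<in>Psi. x \<le> d \<psi> \<and> m = marg \<psi> x \<and> m \<in> \<Gamma> x \<and>
               comb m (neut top) \<in> \<Gamma> top \<and>
               way_below_in {p \<in> Psi. d p = x} (info_le comb) m \<phi>}
          \<phi>)"

end

theory Submission
  imports Defs
begin

text \<open>Take \<open>\<Gamma>\<^sub>x = {(\<psi>, x) | \<psi> \<in> \<Gamma>, \<psi> = \<psi>\<^sup>\<Rightarrow>\<^sup>x}\<close>. Since the order on \<open>\<Psi>\<close> is the
  product of the information order and the order of \<open>D\<close>, suprema and the way-below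
  relation inside the fibre of label \<open>x\<close> are computed on first components: a
  supremum in \<open>\<Phi>\<close> of \<open>x\<close>-supported elements is again \<open>x\<close>-supported (focusing is
  monotone), and conversely a supremum in the fibre is a supremum in \<open>\<Phi>\<close> because
  any upper bound \<open>u\<close> may be replaced by \<open>u\<^sup>\<Rightarrow>\<^sup>x\<close>. Hence \<open>\<chi> \<ll> \<phi>\<close> in \<open>\<Phi>\<close> gives
  \<open>(\<chi>, x) \<ll>\<^sub>x (\<phi>, x)\<close>, and the density of \<open>\<Gamma>\<close> in \<open>\<Phi>\<close> becomes strong density of
  the \<open>\<Gamma>\<^sub>x\<close>; the neutral element \<open>(e, x)\<close> pins the label of upper bounds to \<open>x\<close>.\<close>

lemma info_le_assoc_comb_iff:
  "info_le (assoc_comb comb) p q \<longleftrightarrow> info_le comb (fst p) (fst q) \<and> snd p \<le> snd q"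
  unfolding info_le_def assoc_comb_def by (auto simp: le_iff_sup prod_eq_iff)

lemma directed_wrt_image:
  assumes "directed_wrt le X" and "\<And>a b. le a b \<Longrightarrow> le' (f a) (f b)"
  shows "directed_wrt le' (f ` X)"
  using assms unfolding directed_wrt_def by blast

lemma way_below_in_imp_le:
  assumes "way_below_in C le a b" and "b \<in> C" and "le b b"
  shows "le a b"
proof -
  have "directed_wrt le {b}" and "is_sup_in C le {b} b"
    using assms(2,3) unfolding directed_wrt_def is_sup_in_def by auto
  then show ?thesis
    using assms unfolding way_below_in_def by blast
qed

lemma way_below_in_least:
  assumes "\<forall>c\<in>C. le a c"
  shows "way_below_in C le a b"
  using assms unfolding way_below_in_def directed_wrt_def by blast

locale df_info_algebra =
  fixes comb :: "'a \<Rightarrow> 'a \<Rightarrow> 'a" and e :: 'a and foc :: "'a \<Rightarrow> 'd::lattice \<Rightarrow> 'a"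
  assumes df_axioms: "domain_free_info_algebra comb e foc"
begin

lemma comb_assoc: "comb (comb a b) c = comb a (comb b c)"
  and comb_commute: "comb a b = comb b a"
  and comb_neutral: "comb e a = a"
  and focus_focus: "foc (foc \<psi> y) x = foc \<psi> (inf x y)"
  and focus_comb: "foc (comb (foc \<phi> x) \<psi>) x = comb (foc \<phi> x) (foc \<psi> x)"
  and focus_support: "\<exists>x. foc \<psi> x = \<psi>"
  and comb_focus: "comb \<psi> (foc \<psi> x) = \<psi>"
  using df_axioms unfolding domain_free_info_algebra_def by blast+

lemma info_le_refl: "info_le comb a a"
proof -
  obtain x where "foc a x = a" using focus_support by blast
  then show ?thesis using comb_focus[of a x] unfolding info_le_def by simp
qed

lemma info_le_trans: "info_le comb a b \<Longrightarrow> info_le comb b c \<Longrightarrow> info_le comb a c"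
  unfolding info_le_def by (metis comb_assoc)

lemma neutral_le: "info_le comb e a"
  unfolding info_le_def by (rule comb_neutral)

lemma focus_le: "info_le comb (foc \<psi> x) \<psi>"
  unfolding info_le_def by (metis comb_commute comb_focus)

lemma focus_mono:
  assumes "info_le comb a b"
  shows "info_le comb (foc a x) (foc b x)"
proof -
  have ab: "comb a b = b" using assms unfolding info_le_def .
  have "comb (foc a x) b = comb (comb a (foc a x)) b"
    using ab by (metis comb_assoc comb_commute)
  then have "comb (foc a x) b = b" using ab by (simp add: comb_focus)
  then show ?thesis
    using focus_comb[of a x b] unfolding info_le_def by simp
qed

lemma focus_idem: "foc (foc \<psi> x) x = foc \<psi> x"
  by (simp add: focus_focus)

lemma focus_neutral: "foc e x = e"
  using comb_neutral[of "foc e x"] comb_focus[of e x] by simp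

lemma focus_fixed_mono:
  assumes "foc \<psi> y = \<psi>" and "y \<le> z"
  shows "foc \<psi> z = \<psi>"
  using focus_focus[of \<psi> y z] assms by (simp add: inf_absorb2)

abbreviation fiber :: "'d \<Rightarrow> ('a \<times> 'd) set" where
  "fiber x \<equiv> {p \<in> assoc_carrier foc. assoc_label p = x}"

lemma mem_fiber_iff: "(\<phi>, y) \<in> fiber x \<longleftrightarrow> y = x \<and> foc \<phi> x = \<phi>"
  unfolding assoc_carrier_def assoc_label_def by auto

lemma sup_in_carrier_of_sup_fst:
  assumes X: "X \<subseteq> fiber x" "X \<noteq> {}"
    and s: "is_sup_in UNIV (info_le comb) (fst ` X) s"
  shows "is_sup_in (assoc_carrier foc) (info_le (assoc_comb comb)) X (s, x)"
proof -
  have X_fixed: "snd p = x" "foc (fst p) x = fst p" if "p \<in> X" for p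
    using X that by (auto simp: assoc_carrier_def assoc_label_def)
  have "info_le comb a (foc s x)" if "a \<in> fst ` X" for a
    using that s focus_mono[of a s x] X_fixed unfolding is_sup_in_def by auto
  then have "info_le comb s (foc s x)"
    using s unfolding is_sup_in_def by blast
  then have "foc s x = s"
    using focus_le[of s x] unfolding info_le_def by (metis comb_commute)
  moreover have "snd p \<le> snd u" if "p \<in> X" "info_le (assoc_comb comb) p u" for p u
    using that by (simp add: info_le_assoc_comb_iff)
  ultimately show ?thesis
    using s X X_fixed
    unfolding is_sup_in_def info_le_assoc_comb_iff assoc_carrier_def
    by (auto 0 3)
qed

lemma sup_fst_of_sup_in_fiber:
  assumes X: "X \<subseteq> fiber x"
    and S: "is_sup_in (fiber x) (info_le (assoc_comb comb)) X S"
  shows "is_sup_in UNIV (info_le comb) (fst ` X) (fst S)"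
  unfolding is_sup_in_def
proof (intro conjI ballI impI)
  show "fst S \<in> UNIV" by simp
next
  fix a assume "a \<in> fst ` X"
  then show "info_le comb a (fst S)"
    using S unfolding is_sup_in_def info_le_assoc_comb_iff by auto
next
  fix u assume "u \<in> UNIV" and ub: "\<forall>a\<in>fst ` X. info_le comb a u"
  have X_fixed: "snd p = x" "foc (fst p) x = fst p" if "p \<in> X" for p
    using X that by (auto simp: assoc_carrier_def assoc_label_def)
  have "(foc u x, x) \<in> fiber x"
    using mem_fiber_iff focus_idem by blast
  moreover have "info_le (assoc_comb comb) p (foc u x, x)" if "p \<in> X" for p
    using ub focus_mono[of "fst p" u x] X_fixed[OF that] that
    by (auto simp: info_le_assoc_comb_iff)
  ultimately have "info_le (assoc_comb comb) S (foc u x, x)"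
    using S unfolding is_sup_in_def by blast
  then show "info_le comb (fst S) u"
    using focus_le info_le_trans by (auto simp: info_le_assoc_comb_iff)
qed

lemma way_below_in_fiber:
  assumes "way_below_in UNIV (info_le comb) \<chi> \<phi>"
  shows "way_below_in (fiber x) (info_le (assoc_comb comb)) (\<chi>, x) (\<phi>, x)"
  unfolding way_below_in_def
proof (intro allI impI)
  fix X S
  assume X: "X \<subseteq> fiber x" and dir: "directed_wrt (info_le (assoc_comb comb)) X"
    and S: "is_sup_in (fiber x) (info_le (assoc_comb comb)) X S"
    and le_S: "info_le (assoc_comb comb) (\<phi>, x) S"
  have "directed_wrt (info_le comb) (fst ` X)"
    using dir by (rule directed_wrt_image) (simp add: info_le_assoc_comb_iff)
  moreover have "is_sup_in UNIV (info_le comb) (fst ` X) (fst S)"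
    using X S by (rule sup_fst_of_sup_in_fiber)
  moreover have "info_le comb \<phi> (fst S)"
    using le_S by (simp add: info_le_assoc_comb_iff)
  ultimately obtain p where "p \<in> X" "info_le comb \<chi> (fst p)"
    using assms unfolding way_below_in_def by blast
  moreover have "snd p = x"
    using X \<open>p \<in> X\<close> by (auto simp: assoc_label_def)
  ultimately show "\<exists>c\<in>X. info_le (assoc_comb comb) (\<chi>, x) c"
    by (auto simp: info_le_assoc_comb_iff)
qed

end

locale df_s_continuous_basis = df_info_algebra comb e foc
  for comb :: "'a \<Rightarrow> 'a \<Rightarrow> 'a" and e :: 'a and foc :: "'a \<Rightarrow> 'd::bounded_lattice_top \<Rightarrow> 'a" +
  fixes G :: "'a set"
  assumes comb_closed: "\<And>a b. a \<in> G \<Longrightarrow> b \<in> G \<Longrightarrow> comb a b \<in> G"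
    and neutral_mem: "e \<in> G"
    and directed_sup_exists:
      "\<And>X. X \<subseteq> G \<Longrightarrow> directed_wrt (info_le comb) X \<Longrightarrow> \<exists>s. is_sup_in UNIV (info_le comb) X s"
    and density:
      "\<And>\<phi> x. is_sup_in UNIV (info_le comb)
         {\<psi> \<in> G. \<psi> = foc \<psi> x \<and> way_below_in UNIV (info_le comb) \<psi> \<phi>} (foc \<phi> x)"
begin

definition Gamma :: "'d \<Rightarrow> ('a \<times> 'd) set" where
  "Gamma x = {(\<psi>, x) | \<psi>. \<psi> \<in> G \<and> foc \<psi> x = \<psi>}"

lemma Gamma_subset_fiber: "Gamma x \<subseteq> fiber x"
  unfolding Gamma_def assoc_carrier_def assoc_label_def by auto

lemma assoc_comb_Gamma_closed:
  assumes "p \<in> Gamma x" and "q \<in> Gamma x"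
  shows "assoc_comb comb p q \<in> Gamma x"
proof -
  obtain \<alpha> \<beta> where p: "p = (\<alpha>, x)" "\<alpha> \<in> G" "foc \<alpha> x = \<alpha>"
    and q: "q = (\<beta>, x)" "\<beta> \<in> G" "foc \<beta> x = \<beta>"
    using assms unfolding Gamma_def by blast
  have "foc (comb \<alpha> \<beta>) x = comb \<alpha> \<beta>"
    using focus_comb[of \<alpha> x \<beta>] p q by simp
  then show ?thesis
    using p q comb_closed unfolding Gamma_def assoc_comb_def by auto
qed

lemma assoc_neutral_mem_Gamma: "assoc_neutral e x \<in> Gamma x"
  unfolding Gamma_def assoc_neutral_def using neutral_mem focus_neutral by auto

lemma Gamma_directed_sup:
  assumes X: "X \<subseteq> Gamma x" and dir: "directed_wrt (info_le (assoc_comb comb)) X"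
  shows "\<exists>s. is_sup_in (assoc_carrier foc) (info_le (assoc_comb comb)) X s \<and> assoc_label s = x"
proof -
  have "directed_wrt (info_le comb) (fst ` X)"
    using dir by (rule directed_wrt_image) (simp add: info_le_assoc_comb_iff)
  moreover have "fst ` X \<subseteq> G"
    using X unfolding Gamma_def by auto
  ultimately obtain s where "is_sup_in UNIV (info_le comb) (fst ` X) s"
    using directed_sup_exists by blast
  moreover have "X \<subseteq> fiber x" "X \<noteq> {}"
    using X Gamma_subset_fiber dir unfolding directed_wrt_def by auto
  ultimately have "is_sup_in (assoc_carrier foc) (info_le (assoc_comb comb)) X (s, x)"
    using sup_in_carrier_of_sup_fst by blast
  then show ?thesis
    by (auto simp: assoc_label_def)
qed

lemma Gamma_strong_density:
  assumes "\<Phi> \<in> fiber x"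
  shows "is_sup_in (assoc_carrier foc) (info_le (assoc_comb comb))
    {m. \<exists>\<psi>\<in>assoc_carrier foc. x \<le> assoc_label \<psi> \<and> m = assoc_marg foc \<psi> x \<and> m \<in> Gamma x \<and>
        assoc_comb comb m (assoc_neutral e top) \<in> Gamma top \<and>
        way_below_in (fiber x) (info_le (assoc_comb comb)) m \<Phi>}
    \<Phi>" (is "is_sup_in _ _ ?M _")
proof -
  obtain \<phi> where \<Phi>: "\<Phi> = (\<phi>, x)" and \<phi>_fixed: "foc \<phi> x = \<phi>"
    using assms by (cases \<Phi>) (auto simp: assoc_carrier_def assoc_label_def)
  have mem_M: "(\<chi>, x) \<in> ?M"
    if "(\<chi>, x) \<in> Gamma x" and "way_below_in (fiber x) (info_le (assoc_comb comb)) (\<chi>, x) \<Phi>"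
    for \<chi>
  proof -
    have \<chi>: "\<chi> \<in> G" "foc \<chi> x = \<chi>"
      using that(1) unfolding Gamma_def by auto
    then have "assoc_comb comb (\<chi>, x) (assoc_neutral e top) \<in> Gamma top"
      using focus_fixed_mono[of \<chi> x top] comb_commute[of \<chi> e] comb_neutral
      unfolding Gamma_def assoc_comb_def assoc_neutral_def by simp
    moreover have "assoc_marg foc (\<chi>, x) x = (\<chi>, x)" and "(\<chi>, x) \<in> assoc_carrier foc"
      using \<chi> unfolding assoc_marg_def assoc_carrier_def by auto
    ultimately show ?thesis
      using that unfolding assoc_label_def by (intro CollectI bexI[of _ "(\<chi>, x)"]) auto
  qed
  have "(e, x) \<in> ?M"
  proof (rule mem_M)
    show "(e, x) \<in> Gamma x"
      using assoc_neutral_mem_Gamma unfolding assoc_neutral_def .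
    have "\<forall>p\<in>fiber x. info_le (assoc_comb comb) (e, x) p"
      by (auto simp: info_le_assoc_comb_iff neutral_le assoc_label_def)
    then show "way_below_in (fiber x) (info_le (assoc_comb comb)) (e, x) \<Phi>"
      by (rule way_below_in_least)
  qed
  moreover have "info_le (assoc_comb comb) m \<Phi>" if "m \<in> ?M" for m
  proof (rule way_below_in_imp_le[where C = "fiber x"])
    show "way_below_in (fiber x) (info_le (assoc_comb comb)) m \<Phi>"
      using that by blast
    show "\<Phi> \<in> fiber x" by (fact assms)
    show "info_le (assoc_comb comb) \<Phi> \<Phi>"
      by (simp add: info_le_assoc_comb_iff info_le_refl)
  qed
  moreover have "info_le (assoc_comb comb) \<Phi> u"
    if u_bound: "\<forall>m\<in>?M. info_le (assoc_comb comb) m u" for u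
  proof -
    have "info_le comb \<chi> (fst u)"
      if "\<chi> \<in> G" "\<chi> = foc \<chi> x" "way_below_in UNIV (info_le comb) \<chi> \<phi>" for \<chi>
    proof -
      have "(\<chi>, x) \<in> ?M"
        using that \<Phi> way_below_in_fiber[OF that(3)] by (intro mem_M) (auto simp: Gamma_def)
      then show ?thesis
        using u_bound by (auto simp: info_le_assoc_comb_iff)
    qed
    then have "info_le comb (foc \<phi> x) (fst u)"
      using density[where \<phi> = \<phi> and x = x] unfolding is_sup_in_def by blast
    moreover have "x \<le> snd u"
      using u_bound \<open>(e, x) \<in> ?M\<close> by (auto simp: info_le_assoc_comb_iff)
    ultimately show ?thesis
      using \<Phi> \<phi>_fixed by (simp add: info_le_assoc_comb_iff)
  qed
  ultimately show ?thesis
    using assms unfolding is_sup_in_def by blast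
qed

end

theorem theorem4p7:
  fixes comb :: "'a \<Rightarrow> 'a \<Rightarrow> 'a" and e :: 'a
    and foc :: "'a \<Rightarrow> 'd::bounded_lattice_top \<Rightarrow> 'a"
  assumes "domain_free_info_algebra comb e foc"
    and "df_s_continuous comb e foc"
  shows "\<exists>\<Gamma>. labeled_s_continuous (assoc_carrier foc) assoc_label (assoc_comb comb)
                (assoc_marg foc) (assoc_neutral e) \<Gamma>"
proof -
  obtain G where "\<forall>a\<in>G. \<forall>b\<in>G. comb a b \<in> G" and "e \<in> G"
    and "\<forall>X. X \<subseteq> G \<longrightarrow> directed_wrt (info_le comb) X \<longrightarrow>
           (\<exists>s. is_sup_in UNIV (info_le comb) X s)"
    and "\<forall>\<phi> x. is_sup_in UNIV (info_le comb)
           {\<psi> \<in> G. \<psi> = foc \<psi> x \<and> way_below_in UNIV (info_le comb) \<psi> \<phi>} (foc \<phi> x)"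
    using assms(2) unfolding df_s_continuous_def by blast
  then interpret df_s_continuous_basis comb e foc G
    using assms(1) by unfold_locales blast+
  have "labeled_s_continuous (assoc_carrier foc) assoc_label (assoc_comb comb)
      (assoc_marg foc) (assoc_neutral e) Gamma"
    unfolding labeled_s_continuous_def
    by (intro conjI allI impI ballI Gamma_subset_fiber assoc_comb_Gamma_closed
        assoc_neutral_mem_Gamma Gamma_directed_sup Gamma_strong_density)
  then show ?thesis by blast
qed

end
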